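(* Suppose an SCC $F:\Theta\to 2^Z\setminus\{\emptyset\}$ is pure-Nash-implemented by $\mathcal M=\langle M,g\rangle$. Then $g(M)\subseteq\Delta(Z^* )$.
   Context: Standing setup: $\mathcal I=\{1,\dots,I\}$ finite, $I\ge 3$; $\Theta$ finite or countably infinite; $Z$ finite; $Y=\Delta(Z)$; $u_i^\theta:Z\to\mathbb R$, $U_i^\theta(y)=\sum_zy_zu_i^\theta(z)$. A mechanism $\mathcal M=\langle M=\times_iM_i,g:M\to Y\rangle$ has countable $M_i$; $PNE^{(\mathcal M,\theta)}$ is the set of pure Nash equilibria at $\theta$. $F$ is pure-Nash-implemented by $\mathcal M$ if $\bigcup_{m\in PNE^{(\mathcal M,\theta)}}\mathrm{SUPP}(g[m])=F(\theta)$ for all $\theta$. A nonempty $E\subseteq Z$ is an $i$-$\theta$-max set if $E\subseteq\arg\max_{z\in E}u_i^\theta(z)$ and $E\subseteq\arg\max_{z\in Z}u_j^\theta(z)$ for all $j\ne i$; an $i$-max set if it is such for some $\theta$. $Z^*=\bigcup_{\theta\in\Theta}F(\theta)$ if $Z$ is an $i$-max set for some $i\in\mathcal I$, and $Z^*=Z$ otherwise. *)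

theory Defs
  imports "HOL-Probability.Probability_Mass_Function"
begin

definition exp_util :: "('i \<Rightarrow> 'th \<Rightarrow> 'z::finite \<Rightarrow> real) \<Rightarrow> 'i \<Rightarrow> 'th \<Rightarrow> 'z pmf \<Rightarrow> real" where
  "exp_util u i th y = (\<Sum>z\<in>UNIV. pmf y z * u i th z)"

definition argmax_on :: "('a \<Rightarrow> real) \<Rightarrow> 'a set \<Rightarrow> 'a set" where
  "argmax_on f A = {x \<in> A. \<forall>y\<in>A. f y \<le> f x}"

definition profiles :: "('i \<Rightarrow> 'm set) \<Rightarrow> ('i \<Rightarrow> 'm) set" where
  "profiles Mi = {m. \<forall>i. m i \<in> Mi i}"

definition PNE :: "('i \<Rightarrow> 'th \<Rightarrow> 'z::finite \<Rightarrow> real) \<Rightarrow> ('i \<Rightarrow> 'm set) \<Rightarrow> (('i \<Rightarrow> 'm) \<Rightarrow> 'z pmf) \<Rightarrow> 'th \<Rightarrow> ('i \<Rightarrow> 'm) set" where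
  "PNE u Mi g th = {m \<in> profiles Mi. \<forall>i. \<forall>mi \<in> Mi i.
      exp_util u i th (g (m(i := mi))) \<le> exp_util u i th (g m)}"

definition pure_nash_implements ::
  "('i \<Rightarrow> 'th \<Rightarrow> 'z::finite \<Rightarrow> real) \<Rightarrow> ('th \<Rightarrow> 'z set) \<Rightarrow> ('i \<Rightarrow> 'm set) \<Rightarrow> (('i \<Rightarrow> 'm) \<Rightarrow> 'z pmf) \<Rightarrow> bool" where
  "pure_nash_implements u F Mi g \<longleftrightarrow>
     (\<forall>th. (\<Union>m\<in>PNE u Mi g th. set_pmf (g m)) = F th)"

definition is_max_set_at :: "('i \<Rightarrow> 'th \<Rightarrow> 'z \<Rightarrow> real) \<Rightarrow> 'i \<Rightarrow> 'th \<Rightarrow> 'z set \<Rightarrow> bool" where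
  "is_max_set_at u i th E \<longleftrightarrow> E \<noteq> {} \<and> E \<subseteq> argmax_on (u i th) E \<and>
     (\<forall>j. j \<noteq> i \<longrightarrow> E \<subseteq> argmax_on (u j th) UNIV)"

definition is_max_set :: "('i \<Rightarrow> 'th \<Rightarrow> 'z \<Rightarrow> real) \<Rightarrow> 'i \<Rightarrow> 'z set \<Rightarrow> bool" where
  "is_max_set u i E \<longleftrightarrow> (\<exists>th. is_max_set_at u i th E)"

definition Zstar :: "('i \<Rightarrow> 'th \<Rightarrow> 'z \<Rightarrow> real) \<Rightarrow> ('th \<Rightarrow> 'z set) \<Rightarrow> 'z set" where
  "Zstar u F = (if \<exists>i. is_max_set u i UNIV then (\<Union>th. F th) else UNIV)"

end

theory Submission
  imports Defs
begin

text \<open>If \<open>Z\<close> is an \<open>i\<close>-\<open>\<theta>\<close>-max set, every agent is indifferent among all outcomes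
  at \<open>\<theta>\<close>, so no deviation is profitable and every message profile is a Nash equilibrium
  at \<open>\<theta>\<close>; implementation then forces all outcomes of \<open>g\<close> into \<open>F \<theta> \<subseteq> Z\<^sup>*\<close>.
  Otherwise \<open>Z\<^sup>* = Z\<close> and there is nothing to prove.\<close>

lemma exp_util_const:
  assumes "\<And>z. u i th z = c"
  shows "exp_util u i th y = c"
proof -
  have "exp_util u i th y = (\<Sum>z\<in>UNIV. pmf y z) * c"
    unfolding exp_util_def using assms by (simp add: sum_distrib_right)
  also have "(\<Sum>z\<in>UNIV. pmf y z) = 1"
    using sum_pmf_eq_1[of UNIV y] by simp
  finally show ?thesis by simp
qed

lemma is_max_set_at_UNIV_imp_indifferent:
  assumes "is_max_set_at u i th UNIV"
  shows "u j th z = u j th z'"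
proof -
  have "UNIV \<subseteq> argmax_on (u j th) UNIV"
    using assms unfolding is_max_set_at_def by (cases "j = i") auto
  then have "u j th z \<le> u j th z'" "u j th z' \<le> u j th z"
    unfolding argmax_on_def by auto
  then show ?thesis by simp
qed

lemma PNE_eq_profiles_if_indifferent:
  assumes "\<And>j z z'. u j th z = u j th z'"
  shows "PNE u Mi g th = profiles Mi"
proof -
  have "exp_util u j th y = u j th undefined" for j y
    by (rule exp_util_const) (rule assms)
  then show ?thesis unfolding PNE_def by simp
qed

theorem lemma6:
  fixes u :: "'i::finite \<Rightarrow> 'th::countable \<Rightarrow> 'z::finite \<Rightarrow> real"
    and F :: "'th \<Rightarrow> 'z set"
    and Mi :: "'i \<Rightarrow> 'm set"
    and g :: "('i \<Rightarrow> 'm) \<Rightarrow> 'z pmf"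
  assumes "CARD('i) \<ge> 3"
    and "\<And>i. countable (Mi i)"
    and "\<And>th. F th \<noteq> {}"
    and "pure_nash_implements u F Mi g"
  shows "\<forall>m \<in> profiles Mi. set_pmf (g m) \<subseteq> Zstar u F"
proof (cases "\<exists>i. is_max_set u i UNIV")
  case False
  then show ?thesis by (simp add: Zstar_def)
next
  case True
  then obtain i th where "is_max_set_at u i th UNIV"
    unfolding is_max_set_def by blast
  then have "PNE u Mi g th = profiles Mi"
    by (intro PNE_eq_profiles_if_indifferent is_max_set_at_UNIV_imp_indifferent)
  then have "set_pmf (g m) \<subseteq> F th" if "m \<in> profiles Mi" for m
    using assms(4) that unfolding pure_nash_implements_def by blast
  with True show ?thesis by (auto simp: Zstar_def)
qed

end
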